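(* Fix $(\mu,\sigma)\in S_\lambda\times\Omega$, and let $\widehat\sigma\in\Omega$ be such that the auxiliary TASEP transition probability $\mathbb P(\widehat\sigma\to\sigma)$ is positive. Then there is a family $(g^{\widehat\sigma}_{\widehat\mu})_{\widehat\mu\in S_\lambda}$ of functions $\mathbb R_{>1}\to\mathbb R$ with $g^{\widehat\sigma}_{\widehat\mu}(z)=O(1/z)$ as $z\to\infty$ such that, for all $R>1$, \[\sum_{\widehat\mu\in S_\lambda}\mathbb P\big((\widehat\mu,\widehat\sigma)\to(\mu,\sigma)\big)\,\Psi_{\widehat\mu}(\widehat\sigma\boldsymbol\chi)\,\big(1+g^{\widehat\sigma}_{\widehat\mu}(R)\big)=\Psi_\mu(\sigma\boldsymbol\chi)\,\mathbb P(\widehat\sigma\to\sigma),\] where the probabilities on the left are transition probabilities of $\blacktriangle\mathrm{iTASEP}_\lambda$ and $\boldsymbol\chi$ depends on $R$.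
   Context: Fix parameters $a_k\in(0,1)$ ($k\ge0$) and a nondecreasing tuple $\lambda$ of nonnegative integers with rearrangement set $S_\lambda$. For $w\in\mathfrak S_n$, $wy=(y_{w^{-1}(1)},\dots,y_{w^{-1}(n)})$ and $(wf)(\mathbf x)=f(w\mathbf x)$. Indices mod $n$; $\overline s_i$ ($i\in\mathbb Z/n\mathbb Z$) the transposition of $i,i+1$; $c=(1\,2\cdots n)$. Inhomogeneous TASEP polynomials $(\Psi_\mu(\mathbf x))_{\mu\in S_\lambda}$ (coefficients rational in the $a$'s) are determined up to a common scalar (fixed) by: $\frac{x_i(x_{i+1}-a_{\mu_{i+1}})}{a_{\mu_{i+1}}(x_i-x_{i+1})}(1-\overline s_i)\Psi_\mu=\Psi_{\overline s_i\mu}$ if $\mu_i<\mu_{i+1}$; $\overline s_i\Psi_\mu=\Psi_\mu$ if $\mu_i=\mu_{i+1}$; $c\Psi_{c\mu}=\Psi_\mu$. Stones $\blacktriangle_1,\dots,\blacktriangle_n$ with densities in $\{1,2\}$, $1=\varrho(\blacktriangle_1)\le\cdots\le\varrho(\blacktriangle_n)=2$. $\Omega$: the $\sigma\in\mathfrak S_n$ such that stones of each density appear in the same cyclic order in $\blacktriangle_{\sigma^{-1}(1)},\dots,\blacktriangle_{\sigma^{-1}(n)}$ as in $\blacktriangle_1,\dots,\blacktriangle_n$. $\mathfrak K(\sigma)=\#\{i:\varrho(\blacktriangle_{\sigma^{-1}(i)})<\varrho(\blacktriangle_{\sigma^{-1}(i+1)})\}$. Auxiliary TASEP on $\Omega$: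 $\mathbb P(\sigma\to\overline s_i\sigma)=1/n$ if $\varrho(\blacktriangle_{\sigma^{-1}(i)})<\varrho(\blacktriangle_{\sigma^{-1}(i+1)})$, $\mathbb P(\sigma\to\sigma)=1-\mathfrak K(\sigma)/n$, others $0$. For $j$ with $\varrho(\blacktriangle_j)=1$, $p(j)\in[0,1)$ fixed. For $R>1$, $\boldsymbol\chi=(\chi_j)$ with $\chi_j=1/p(j)$ if $\varrho(\blacktriangle_j)=1$ and $p(j)>0$, $\chi_j=R$ otherwise. $\blacktriangle\mathrm{iTASEP}_\lambda$ on $S_\lambda\times\Omega$: if $\varrho(\blacktriangle_{\sigma^{-1}(i)})<\varrho(\blacktriangle_{\sigma^{-1}(i+1)})$ and $\mu_i>\mu_{i+1}$, $\mathbb P((\mu,\sigma)\to(\overline s_i\mu,\overline s_i\sigma))=\frac1np(\sigma^{-1}(i))a_{\mu_i}$, $\mathbb P((\mu,\sigma)\to(\mu,\overline s_i\sigma))=\frac1n[1-p(\sigma^{-1}(i))a_{\mu_i}]$; if the density condition holds and $\mu_i\le\mu_{i+1}$, $\mathbb P((\mu,\sigma)\to(\mu,\overline s_i\sigma))=\frac1n$; $\mathbb P((\mu,\sigma)\to(\mu,\sigma))=1-\mathfrak K(\sigma)/n$; others $0$. *)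

theory Defs
  imports "HOL-Analysis.Analysis" "HOL-Combinatorics.Permutations"
begin

text \<open>Conventions: positions are 0-indexed, 0..n-1 (paper: 1..n); indices mod n.
Tuples are functions nat => _, only entries below n matter.
Permutations of {0..<n} are functions nat => nat with  w permutes {..<n}.\<close>

definition nxt :: "nat \<Rightarrow> nat \<Rightarrow> nat" where
  "nxt n i = (i + 1) mod n"

definition trsp :: "nat \<Rightarrow> nat \<Rightarrow> nat \<Rightarrow> nat" where
  "trsp i j k = (if k = i then j else if k = j then i else k)"

definition sbar :: "nat \<Rightarrow> nat \<Rightarrow> nat \<Rightarrow> nat" where
  "sbar n i = trsp i (nxt n i)"

definition cyc :: "nat \<Rightarrow> nat \<Rightarrow> nat" where
  "cyc n i = (if i < n then (i + 1) mod n else i)"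

definition act :: "(nat \<Rightarrow> nat) \<Rightarrow> (nat \<Rightarrow> 'a) \<Rightarrow> nat \<Rightarrow> 'a" where
  "act w y = y \<circ> inv w"

definition Srearr :: "nat \<Rightarrow> (nat \<Rightarrow> nat) \<Rightarrow> (nat \<Rightarrow> nat) set" where
  "Srearr n lam = {act w lam | w. w permutes {..<n}}"

definition poly_fun :: "nat \<Rightarrow> ((nat \<Rightarrow> real) \<Rightarrow> real) \<Rightarrow> bool" where
  "poly_fun n f \<longleftrightarrow> (\<exists>(d::nat) (c::(nat \<Rightarrow> nat) \<Rightarrow> real).
     \<forall>x. f x = (\<Sum>\<alpha>\<in>{\<alpha>. (\<forall>i. \<alpha> i \<le> d) \<and> (\<forall>i\<ge>n. \<alpha> i = 0)}.
                    c \<alpha> * (\<Prod>i<n. x i ^ \<alpha> i)))"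

definition is_TASEP_family ::
  "nat \<Rightarrow> (nat \<Rightarrow> real) \<Rightarrow> (nat \<Rightarrow> nat) \<Rightarrow> ((nat \<Rightarrow> nat) \<Rightarrow> (nat \<Rightarrow> real) \<Rightarrow> real) \<Rightarrow> bool" where
  "is_TASEP_family n a lam Psi \<longleftrightarrow>
     (\<forall>\<mu>\<in>Srearr n lam. poly_fun n (Psi \<mu>)) \<and>
     (\<exists>\<mu>\<in>Srearr n lam. \<exists>x. Psi \<mu> x \<noteq> 0) \<and>
     (\<forall>\<mu>\<in>Srearr n lam. \<forall>i<n. \<mu> i < \<mu> (nxt n i) \<longrightarrow>
        (\<forall>x. x i \<noteq> x (nxt n i) \<longrightarrow>
           x i * (x (nxt n i) - a (\<mu> (nxt n i))) / (a (\<mu> (nxt n i)) * (x i - x (nxt n i)))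
             * (Psi \<mu> x - Psi \<mu> (act (sbar n i) x))
           = Psi (act (sbar n i) \<mu>) x)) \<and>
     (\<forall>\<mu>\<in>Srearr n lam. \<forall>i<n. \<mu> i = \<mu> (nxt n i) \<longrightarrow>
        (\<forall>x. Psi \<mu> (act (sbar n i) x) = Psi \<mu> x)) \<and>
     (\<forall>\<mu>\<in>Srearr n lam. \<forall>x. Psi (act (cyc n) \<mu>) (act (cyc n) x) = Psi \<mu> x)"

text \<open>Omega: stones of each density appear in the same cyclic order\<close>
definition Omega :: "nat \<Rightarrow> (nat \<Rightarrow> nat) \<Rightarrow> (nat \<Rightarrow> nat) set" where
  "Omega n rho = {\<sigma>. \<sigma> permutes {..<n} \<and>
     (\<forall>d\<in>{1,2}. \<exists>k. filter (\<lambda>j. rho j = d) (map (inv \<sigma>) [0..<n])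
                     = rotate k (filter (\<lambda>j. rho j = d) [0..<n]))}"

definition dcond :: "nat \<Rightarrow> (nat \<Rightarrow> nat) \<Rightarrow> (nat \<Rightarrow> nat) \<Rightarrow> nat \<Rightarrow> bool" where
  "dcond n rho \<sigma> i \<longleftrightarrow> rho (inv \<sigma> i) < rho (inv \<sigma> (nxt n i))"

definition Kfrak :: "nat \<Rightarrow> (nat \<Rightarrow> nat) \<Rightarrow> (nat \<Rightarrow> nat) \<Rightarrow> nat" where
  "Kfrak n rho \<sigma> = card {i. i < n \<and> dcond n rho \<sigma> i}"

definition auxP :: "nat \<Rightarrow> (nat \<Rightarrow> nat) \<Rightarrow> (nat \<Rightarrow> nat) \<Rightarrow> (nat \<Rightarrow> nat) \<Rightarrow> real" where
  "auxP n rho \<sigma> \<tau> =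
     (\<Sum>i<n. if dcond n rho \<sigma> i \<and> \<tau> = sbar n i \<circ> \<sigma> then 1 / real n else 0)
     + (if \<tau> = \<sigma> then 1 - real (Kfrak n rho \<sigma>) / real n else 0)"

definition fullP :: "nat \<Rightarrow> (nat \<Rightarrow> real) \<Rightarrow> (nat \<Rightarrow> nat) \<Rightarrow> (nat \<Rightarrow> real) \<Rightarrow>
    (nat \<Rightarrow> nat) \<Rightarrow> (nat \<Rightarrow> nat) \<Rightarrow> (nat \<Rightarrow> nat) \<Rightarrow> (nat \<Rightarrow> nat) \<Rightarrow> real" where
  "fullP n a rho p \<mu> \<sigma> \<mu>' \<tau> =
     (\<Sum>i<n. if dcond n rho \<sigma> i then
        (if \<mu> i > \<mu> (nxt n i) then
            (if \<mu>' = act (sbar n i) \<mu> \<and> \<tau> = sbar n i \<circ> \<sigma>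
             then p (inv \<sigma> i) * a (\<mu> i) / real n else 0)
          + (if \<mu>' = \<mu> \<and> \<tau> = sbar n i \<circ> \<sigma>
             then (1 - p (inv \<sigma> i) * a (\<mu> i)) / real n else 0)
         else (if \<mu>' = \<mu> \<and> \<tau> = sbar n i \<circ> \<sigma> then 1 / real n else 0))
      else 0)
     + (if \<mu>' = \<mu> \<and> \<tau> = \<sigma> then 1 - real (Kfrak n rho \<sigma>) / real n else 0)"

definition chi :: "(nat \<Rightarrow> nat) \<Rightarrow> (nat \<Rightarrow> real) \<Rightarrow> real \<Rightarrow> nat \<Rightarrow> real" where
  "chi rho p R j = (if rho j = 1 \<and> p j > 0 then 1 / p j else R)"

end

theory Submission
  imports Defs "HOL-Real_Asymp.Real_Asymp"
begin

text \<open>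
  From \<open>\<sigma>h\<close> the auxiliary chain either stays put, and then so does the \<open>\<mu>\<close>-component with the same
  probability, or it swaps the stones at the unique positions \<open>i, i+1\<close> carrying densities 1 and 2,
  and then the \<open>\<mu>\<close>-component performs the local move at \<open>i\<close> with rate \<open>P = p(\<sigma>h\<^sup>-\<^sup>1 i)\<close>.
  In the variables \<open>y = \<sigma>h\<chi>\<close> one has \<open>y\<^sub>i = 1/P\<close> (or \<open>R\<close> if \<open>P = 0\<close>), \<open>y\<^sub>i\<^sub>+\<^sub>1 = R\<close> and
  \<open>\<sigma>\<chi> = s\<^sub>i y\<close>. If \<open>P = 0\<close> or \<open>\<mu>\<^sub>i = \<mu>\<^sub>i\<^sub>+\<^sub>1\<close>, \<open>\<Psi>\<^sub>\<mu>\<close> does not distinguish \<open>y\<close> from \<open>s\<^sub>i y\<close>.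
  Otherwise the exchange relation expresses \<open>\<Psi>\<close> at \<open>s\<^sub>i y\<close> through \<open>\<Psi>\<close> at \<open>y\<close> with factors
  rational in \<open>1/P\<close>, \<open>R\<close> and \<open>a\<close>; because \<open>P \<cdot> (1/P) = 1\<close> they differ from the transition rates
  only by a factor \<open>1 + c/(R - a) = 1 + O(1/R)\<close>.
\<close>

lemma sbar_eq_transpose: "sbar n i = Transposition.transpose i (nxt n i)"
  by (simp add: sbar_def trsp_def Transposition.transpose_def fun_eq_iff)

lemma nxt_less: "0 < n \<Longrightarrow> nxt n i < n"
  by (simp add: nxt_def)

lemma nxt_neq: "2 \<le> n \<Longrightarrow> i < n \<Longrightarrow> nxt n i \<noteq> i"
  by (cases "Suc i = n") (auto simp: nxt_def)

lemma sbar_permutes: "0 < n \<Longrightarrow> i < n \<Longrightarrow> sbar n i permutes {..<n}"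
  by (simp add: sbar_eq_transpose permutes_swap_id nxt_less)

lemma act_comp: "bij f \<Longrightarrow> bij g \<Longrightarrow> act f (act g x) = act (f \<circ> g) x"
  by (simp add: act_def o_inv_distrib o_assoc)

lemma act_sbar_at [simp]: "act (sbar n i) x i = x (nxt n i)"
  by (simp add: act_def sbar_eq_transpose)

lemma act_sbar_at_nxt [simp]: "act (sbar n i) x (nxt n i) = x i"
  by (simp add: act_def sbar_eq_transpose)

lemma act_sbar_involutive [simp]: "act (sbar n i) (act (sbar n i) x) = x"
  by (simp add: act_def sbar_eq_transpose fun_eq_iff)

lemma act_sbar_fixed: "x i = x (nxt n i) \<Longrightarrow> act (sbar n i) x = x"
  by (auto simp: act_def fun_eq_iff sbar_eq_transpose Transposition.transpose_def)

lemma sbar_comp_neq: "2 \<le> n \<Longrightarrow> k < n \<Longrightarrow> \<sigma> permutes {..<n} \<Longrightarrow> \<sigma> \<noteq> sbar n k \<circ> \<sigma>"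
proof
  assume "2 \<le> n" "k < n" "\<sigma> permutes {..<n}" "\<sigma> = sbar n k \<circ> \<sigma>"
  then have "sbar n k k = k"
    by (metis comp_apply permutes_inverses(1))
  with \<open>2 \<le> n\<close> \<open>k < n\<close> show False
    by (simp add: sbar_eq_transpose nxt_neq)
qed

lemma sum_eq_single_term:
  "finite A \<Longrightarrow> a \<in> A \<Longrightarrow> (\<And>x. x \<in> A \<Longrightarrow> x \<noteq> a \<Longrightarrow> f x = 0) \<Longrightarrow> sum f A = f a"
  by (simp add: sum.remove sum.neutral)

lemma bigo_inverse_shift: "(\<lambda>R::real. c / (R - A)) \<in> O[at_top](\<lambda>z. 1 / z)"
  by real_asymp

lemma Srearr_finite: "finite (Srearr n lam)"
proof -
  have "Srearr n lam = (\<lambda>w. act w lam) ` {w. w permutes {..<n}}"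
    by (auto simp: Srearr_def)
  then show ?thesis
    by (simp add: finite_permutations)
qed

lemma Srearr_act_sbar:
  assumes "0 < n" "\<mu> \<in> Srearr n lam" "i < n"
  shows "act (sbar n i) \<mu> \<in> Srearr n lam"
proof -
  obtain w where w: "w permutes {..<n}" "\<mu> = act w lam"
    using assms(2) by (auto simp: Srearr_def)
  have "act (sbar n i) \<mu> = act (sbar n i \<circ> w) lam"
    using w act_comp permutes_bij[OF w(1)] permutes_bij[OF sbar_permutes[OF assms(1,3)]] by simp
  moreover have "sbar n i \<circ> w permutes {..<n}"
    using w assms by (simp add: permutes_compose sbar_permutes)
  ultimately show ?thesis
    by (auto simp: Srearr_def)
qed

subsection \<open>The exchange relation with cleared denominators\<close>

lemma TASEP_exchange:
  assumes Psi: "is_TASEP_family n a lam Psi" and "\<mu> \<in> Srearr n lam" "i < n"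
    and lt: "\<mu> i < \<mu> (nxt n i)" and A: "a (\<mu> (nxt n i)) \<noteq> 0"
  shows "a (\<mu> (nxt n i)) * (x i - x (nxt n i)) * Psi (act (sbar n i) \<mu>) x
         = x i * (x (nxt n i) - a (\<mu> (nxt n i))) * (Psi \<mu> x - Psi \<mu> (act (sbar n i) x))"
proof (cases "x i = x (nxt n i)")
  case True
  then show ?thesis
    by (simp add: act_sbar_fixed)
next
  case False
  with Psi assms(2,3) lt
  have "x i * (x (nxt n i) - a (\<mu> (nxt n i))) / (a (\<mu> (nxt n i)) * (x i - x (nxt n i)))
          * (Psi \<mu> x - Psi \<mu> (act (sbar n i) x)) = Psi (act (sbar n i) \<mu>) x"
    unfolding is_TASEP_family_def by blast
  with False A show ?thesis
    by (auto simp: field_simps)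
qed

lemma TASEP_symmetric:
  "is_TASEP_family n a lam Psi \<Longrightarrow> \<mu> \<in> Srearr n lam \<Longrightarrow> i < n \<Longrightarrow> \<mu> i = \<mu> (nxt n i)
    \<Longrightarrow> Psi \<mu> (act (sbar n i) x) = Psi \<mu> x"
  unfolding is_TASEP_family_def by blast

lemma TASEP_swap_ratio:
  assumes Psi: "is_TASEP_family n a lam Psi" and "0 < n" and \<mu>: "\<mu> \<in> Srearr n lam" "i < n"
    and gt: "\<mu> i > \<mu> (nxt n i)" and A: "a (\<mu> i) \<noteq> 0"
  shows "x (nxt n i) * (x i - a (\<mu> i)) * Psi \<mu> x
         = x i * (x (nxt n i) - a (\<mu> i)) * Psi \<mu> (act (sbar n i) x)"
proof (cases "x i = x (nxt n i)")
  case True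
  then show ?thesis
    by (simp add: act_sbar_fixed)
next
  case False
  text \<open>By the exchange relation for \<open>s\<^sub>i \<mu>\<close> at \<open>x\<close> and at \<open>s\<^sub>i x\<close>, both values of \<open>\<Psi>\<^sub>\<mu>\<close> are multiples
    of one and the same difference \<open>D\<close> of values of \<open>\<Psi>\<^bsub>s\<^sub>i \<mu>\<^esub>\<close>.\<close>
  define \<nu> where "\<nu> = act (sbar n i) \<mu>"
  have \<nu>: "\<nu> \<in> Srearr n lam" "\<nu> i < \<nu> (nxt n i)" "act (sbar n i) \<nu> = \<mu>" "\<nu> (nxt n i) = \<mu> i"
    using Srearr_act_sbar[OF \<open>0 < n\<close> \<mu>] gt by (auto simp: \<nu>_def)
  define D where "D = Psi \<nu> x - Psi \<nu> (act (sbar n i) x)"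
  have at_x: "a (\<mu> i) * (x i - x (nxt n i)) * Psi \<mu> x = x i * (x (nxt n i) - a (\<mu> i)) * D"
    using TASEP_exchange[OF Psi \<nu>(1) \<open>i < n\<close> \<nu>(2), of x] \<nu> A by (simp add: D_def)
  have at_sx: "a (\<mu> i) * (x i - x (nxt n i)) * Psi \<mu> (act (sbar n i) x)
               = x (nxt n i) * (x i - a (\<mu> i)) * D"
    using TASEP_exchange[OF Psi \<nu>(1) \<open>i < n\<close> \<nu>(2), of "act (sbar n i) x"] \<nu> A
    by (simp add: D_def algebra_simps)
  let ?A = "a (\<mu> i)" and ?u = "x i" and ?v = "x (nxt n i)"
  have "?A * (?u - ?v) * (?v * (?u - ?A) * Psi \<mu> x)
        = ?v * (?u - ?A) * (?A * (?u - ?v) * Psi \<mu> x)"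
    by (simp only: ac_simps)
  also have "\<dots> = ?v * (?u - ?A) * (?u * (?v - ?A) * D)"
    by (simp only: at_x)
  also have "\<dots> = ?u * (?v - ?A) * (?v * (?u - ?A) * D)"
    by (rule mult.left_commute)
  also have "\<dots> = ?u * (?v - ?A) * (?A * (?u - ?v) * Psi \<mu> (act (sbar n i) x))"
    by (simp only: at_sx)
  also have "\<dots> = ?A * (?u - ?v) * (?u * (?v - ?A) * Psi \<mu> (act (sbar n i) x))"
    by (simp only: ac_simps)
  finally show ?thesis
    using False A by simp
qed

lemma swap_step_iff:
  assumes n: "2 \<le> n" and \<sigma>: "\<sigma> permutes {..<n}" and "i < n" "k < n" and dcond_i: "dcond n rho \<sigma> i"
  shows "dcond n rho \<sigma> k \<and> sbar n i \<circ> \<sigma> = sbar n k \<circ> \<sigma> \<longleftrightarrow> k = i"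
proof (intro iffI; (elim conjE)?)
  assume dcond_k: "dcond n rho \<sigma> k" and same: "sbar n i \<circ> \<sigma> = sbar n k \<circ> \<sigma>"
  show "k = i"
  proof (rule ccontr)
    assume "k \<noteq> i"
    have "sbar n k x = sbar n i x" for x
      using fun_cong[OF same, of "inv \<sigma> x"] permutes_inverses(1)[OF \<sigma>] by simp
    then have sbar_k_i: "sbar n k i = nxt n i"
      by (simp add: sbar_eq_transpose)
    have "i = nxt n k"
    proof (rule ccontr)
      assume "i \<noteq> nxt n k"
      with \<open>k \<noteq> i\<close> have "sbar n k i = i"
        by (simp add: sbar_eq_transpose)
      with sbar_k_i nxt_neq[OF n \<open>i < n\<close>] show False
        by simp
    qed
    moreover from this sbar_k_i have "k = nxt n i"
      by (simp add: sbar_eq_transpose)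
    ultimately show False
      using dcond_i dcond_k by (simp add: dcond_def)
  qed
qed (use dcond_i in simp)

lemma dcond_densities:
  assumes "0 < n" "\<sigma> permutes {..<n}" "i < n" "dcond n rho \<sigma> i"
    and rho_vals: "\<And>j. j < n \<Longrightarrow> rho j \<in> {1, 2}"
  shows "rho (inv \<sigma> i) = 1" "rho (inv \<sigma> (nxt n i)) = 2"
proof -
  have "inv \<sigma> i < n" "inv \<sigma> (nxt n i) < n"
    using permutes_in_image[OF permutes_inv[OF assms(2)]] assms(3) nxt_less[OF assms(1)] by auto
  then have "rho (inv \<sigma> i) \<in> {1, 2}" "rho (inv \<sigma> (nxt n i)) \<in> {1, 2}"
    using rho_vals by blast+
  with assms(4) show "rho (inv \<sigma> i) = 1" "rho (inv \<sigma> (nxt n i)) = 2"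
    by (auto simp: dcond_def)
qed

lemma auxP_positive_step:
  assumes "auxP n rho \<sigma>h \<sigma> > 0" "\<sigma> \<noteq> \<sigma>h"
  obtains i where "i < n" "dcond n rho \<sigma>h i" "\<sigma> = sbar n i \<circ> \<sigma>h"
proof -
  have "\<exists>i<n. dcond n rho \<sigma>h i \<and> \<sigma> = sbar n i \<circ> \<sigma>h"
  proof (rule ccontr)
    assume "\<not> ?thesis"
    with assms(2) have "auxP n rho \<sigma>h \<sigma> = 0"
      unfolding auxP_def by (auto intro!: sum.neutral)
    with assms(1) show False
      by simp
  qed
  with that show ?thesis
    by blast
qed

lemma auxP_stay:
  "2 \<le> n \<Longrightarrow> \<sigma> permutes {..<n} \<Longrightarrow> auxP n rho \<sigma> \<sigma> = 1 - real (Kfrak n rho \<sigma>) / real n"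
  unfolding auxP_def by (simp add: sbar_comp_neq)

lemma auxP_swap:
  assumes "2 \<le> n" "\<sigma> permutes {..<n}" "i < n" "dcond n rho \<sigma> i"
  shows "auxP n rho \<sigma> (sbar n i \<circ> \<sigma>) = 1 / real n"
  using assms sbar_comp_neq[OF assms(1,3,2)]
  by (simp add: auxP_def swap_step_iff cong: conj_cong)

lemma sum_fullP_stay:
  assumes "2 \<le> n" "\<sigma> permutes {..<n}" "\<mu> \<in> Srearr n lam"
  shows "(\<Sum>\<mu>h\<in>Srearr n lam. fullP n a rho p \<mu>h \<sigma> \<mu> \<sigma> * F \<mu>h)
         = (1 - real (Kfrak n rho \<sigma>) / real n) * F \<mu>"
proof -
  have "fullP n a rho p \<mu>h \<sigma> \<mu> \<sigma> = (if \<mu>h = \<mu> then 1 - real (Kfrak n rho \<sigma>) / real n else 0)"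
    for \<mu>h
    unfolding fullP_def using sbar_comp_neq[OF assms(1) _ assms(2)] by (auto intro!: sum.neutral)
  with assms(3) show ?thesis
    by (simp add: Srearr_finite if_distrib[of "\<lambda>c. c * _"] cong: if_cong)
qed

subsection \<open>The \<open>\<mu>\<close>-component along a swap of the stones\<close>

definition swap_move_prob :: "nat \<Rightarrow> (nat \<Rightarrow> real) \<Rightarrow> real \<Rightarrow> nat \<Rightarrow> (nat \<Rightarrow> nat) \<Rightarrow> (nat \<Rightarrow> nat) \<Rightarrow> real"
  where "swap_move_prob n a P i \<mu>h \<mu> =
    (if \<mu>h i > \<mu>h (nxt n i) then
       (if \<mu> = act (sbar n i) \<mu>h then P * a (\<mu>h i) else 0) + (if \<mu> = \<mu>h then 1 - P * a (\<mu>h i) else 0)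
     else (if \<mu> = \<mu>h then 1 else 0))"

lemma fullP_swap:
  assumes n: "2 \<le> n" and \<sigma>h: "\<sigma>h permutes {..<n}" and i: "i < n" "dcond n rho \<sigma>h i"
  shows "fullP n a rho p \<mu>h \<sigma>h \<mu> (sbar n i \<circ> \<sigma>h) = swap_move_prob n a (p (inv \<sigma>h i)) i \<mu>h \<mu> / real n"
proof -
  have step: "sbar n i \<circ> \<sigma>h = sbar n k \<circ> \<sigma>h \<longleftrightarrow> k = i" if "k < n" "dcond n rho \<sigma>h k" for k
    using swap_step_iff[OF n \<sigma>h i(1) that(1) i(2)] that(2) by blast
  show ?thesis
    unfolding fullP_def swap_move_prob_def
    using i sbar_comp_neq[OF n i(1) \<sigma>h]
    by (subst sum_eq_single_term[where a = i]) (auto simp: step add_divide_distrib)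
qed

lemma sum_swap_move_prob:
  assumes "0 < n" "\<mu> \<in> Srearr n lam" "i < n"
  shows "(\<Sum>\<mu>h\<in>Srearr n lam. swap_move_prob n a P i \<mu>h \<mu> * F \<mu>h)
         = (if \<mu> i < \<mu> (nxt n i) then P * a (\<mu> (nxt n i)) * F (act (sbar n i) \<mu>) else 0)
           + (if \<mu> (nxt n i) < \<mu> i then 1 - P * a (\<mu> i) else 1) * F \<mu>"
proof -
  have "swap_move_prob n a P i \<mu>h \<mu> =
          (if \<mu>h = act (sbar n i) \<mu> \<and> \<mu> i < \<mu> (nxt n i) then P * a (\<mu> (nxt n i)) else 0)
          + (if \<mu>h = \<mu> then (if \<mu> (nxt n i) < \<mu> i then 1 - P * a (\<mu> i) else 1) else 0)" for \<mu>h
    unfolding swap_move_prob_def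
    by (auto dest: arg_cong[where f = "\<lambda>\<mu>. \<mu> i"] arg_cong[where f = "\<lambda>\<mu>. \<mu> (nxt n i)"])
  with Srearr_act_sbar[OF assms] assms(2) show ?thesis
    by (simp add: Srearr_finite distrib_right sum.distrib if_distrib[of "\<lambda>c. c * _"] cong: if_cong)
qed

lemma swap_balance_descent:
  assumes Psi: "is_TASEP_family n a lam Psi" and "0 < n" and \<mu>: "\<mu> \<in> Srearr n lam" "i < n"
    and gt: "\<mu> (nxt n i) < \<mu> i" and A: "0 < a (\<mu> i)" "a (\<mu> i) < R"
    and P: "0 < P" and y: "y i = 1 / P" "y (nxt n i) = R"
  shows "(1 - P * a (\<mu> i)) * (Psi \<mu> y * (1 + a (\<mu> i) / (R - a (\<mu> i))))
         = Psi \<mu> (act (sbar n i) y)"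
proof -
  let ?A = "a (\<mu> i)"
  have ratio: "R * (1 / P - ?A) * Psi \<mu> y = 1 / P * (R - ?A) * Psi \<mu> (act (sbar n i) y)"
    using TASEP_swap_ratio[OF Psi \<open>0 < n\<close> \<mu> gt, of y] A y by simp
  have "(1 - P * ?A) * (Psi \<mu> y * (1 + ?A / (R - ?A))) = P * (R * (1 / P - ?A) * Psi \<mu> y) / (R - ?A)"
    using P A by (simp add: field_simps)
  also have "\<dots> = Psi \<mu> (act (sbar n i) y)"
    unfolding ratio using P A by simp
  finally show ?thesis .
qed

lemma swap_balance_ascent:
  assumes Psi: "is_TASEP_family n a lam Psi" and \<mu>: "\<mu> \<in> Srearr n lam" "i < n"
    and lt: "\<mu> i < \<mu> (nxt n i)" and A: "0 < a (\<mu> (nxt n i))" "a (\<mu> (nxt n i)) < R"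
    and P: "0 < P" and y: "y i = 1 / P" "y (nxt n i) = R"
  shows "P * a (\<mu> (nxt n i))
           * (Psi (act (sbar n i) \<mu>) y * (1 + (a (\<mu> (nxt n i)) - 1 / P) / (R - a (\<mu> (nxt n i)))))
         + Psi \<mu> y = Psi \<mu> (act (sbar n i) y)"
proof -
  let ?A = "a (\<mu> (nxt n i))" and ?\<nu> = "act (sbar n i) \<mu>"
  have exchange: "?A * (1 / P - R) * Psi ?\<nu> y = 1 / P * (R - ?A) * (Psi \<mu> y - Psi \<mu> (act (sbar n i) y))"
    using TASEP_exchange[OF Psi \<mu> lt, of y] A y by simp
  have "P * ?A * (Psi ?\<nu> y * (1 + (?A - 1 / P) / (R - ?A))) = - P * (?A * (1 / P - R) * Psi ?\<nu> y) / (R - ?A)"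
    using P A by (simp add: field_simps)
  also have "\<dots> = Psi \<mu> (act (sbar n i) y) - Psi \<mu> y"
    unfolding exchange using P A by simp
  finally show ?thesis
    by simp
qed

lemma swap_balance_positive_rate:
  assumes Psi: "is_TASEP_family n a lam Psi" and n: "0 < n" and a_range: "\<And>k. 0 < a k \<and> a k < 1"
    and \<mu>: "\<mu> \<in> Srearr n lam" "i < n" and P: "0 < P"
    and y: "\<And>R. y R i = 1 / P" and y_nxt: "\<And>R. y R (nxt n i) = R"
  shows "\<exists>g. (\<forall>\<mu>h\<in>Srearr n lam. g \<mu>h \<in> O[at_top](\<lambda>z. 1 / z)) \<and>
           (\<forall>R>1. (\<Sum>\<mu>h\<in>Srearr n lam. swap_move_prob n a P i \<mu>h \<mu> * Psi \<mu>h (y R) * (1 + g \<mu>h R))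
                  = Psi \<mu> (act (sbar n i) (y R)))"
proof -
  have A: "0 < a k" "a k < R" if "1 < R" for k R
    using a_range[of k] that by auto
  let ?sum = "\<lambda>g R. \<Sum>\<mu>h\<in>Srearr n lam. swap_move_prob n a P i \<mu>h \<mu> * (Psi \<mu>h (y R) * (1 + g \<mu>h R))"
  consider "\<mu> i = \<mu> (nxt n i)" | "\<mu> (nxt n i) < \<mu> i" | "\<mu> i < \<mu> (nxt n i)"
    by linarith
  then show ?thesis
  proof cases
    case 1
    then show ?thesis
      by (intro exI[of _ "\<lambda>_ _. 0"]) (simp add: sum_swap_move_prob[OF n \<mu>] TASEP_symmetric[OF Psi \<mu>] mult.assoc)
  next
    case 2
    define g :: "(nat \<Rightarrow> nat) \<Rightarrow> real \<Rightarrow> real" where "g = (\<lambda>_ R. a (\<mu> i) / (R - a (\<mu> i)))"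
    have "?sum g R = Psi \<mu> (act (sbar n i) (y R))" if "1 < R" for R
      using 2 swap_balance_descent[OF Psi n \<mu> 2 A[OF that] P y y_nxt]
      by (simp add: sum_swap_move_prob[OF n \<mu>] g_def)
    then show ?thesis
      by (intro exI[of _ g]) (simp add: g_def bigo_inverse_shift mult.assoc)
  next
    case 3
    define g where
      "g = (\<lambda>\<mu>h R. (if \<mu>h = \<mu> then 0 else a (\<mu> (nxt n i)) - 1 / P) / (R - a (\<mu> (nxt n i))))"
    have "act (sbar n i) \<mu> \<noteq> \<mu>"
      using 3 by (metis act_sbar_at less_irrefl)
    then have "?sum g R = Psi \<mu> (act (sbar n i) (y R))" if "1 < R" for R
      using 3 swap_balance_ascent[OF Psi \<mu> 3 A[OF that] P y y_nxt]
      by (simp add: sum_swap_move_prob[OF n \<mu>] g_def)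
    then show ?thesis
      by (intro exI[of _ g]) (simp add: g_def bigo_inverse_shift mult.assoc)
  qed
qed

lemma swap_balance:
  assumes Psi: "is_TASEP_family n a lam Psi" and n: "0 < n" and a_range: "\<And>k. 0 < a k \<and> a k < 1"
    and \<mu>: "\<mu> \<in> Srearr n lam" "i < n" and "0 \<le> P"
    and y_i: "\<And>R. y R i = (if P > 0 then 1 / P else R)" and y_nxt: "\<And>R. y R (nxt n i) = R"
  shows "\<exists>g. (\<forall>\<mu>h\<in>Srearr n lam. g \<mu>h \<in> O[at_top](\<lambda>z. 1 / z)) \<and>
           (\<forall>R>1. (\<Sum>\<mu>h\<in>Srearr n lam. swap_move_prob n a P i \<mu>h \<mu> * Psi \<mu>h (y R) * (1 + g \<mu>h R))
                  = Psi \<mu> (act (sbar n i) (y R)))"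
proof (cases "P = 0")
  case True
  then have "act (sbar n i) (y R) = y R" for R
    using y_i y_nxt by (simp add: act_sbar_fixed)
  with True show ?thesis
    by (intro exI[of _ "\<lambda>_ _. 0"]) (simp add: sum_swap_move_prob[OF n \<mu>])
next
  case False
  with \<open>0 \<le> P\<close> have "0 < P"
    by simp
  with y_i have "y R i = 1 / P" for R
    by simp
  then show ?thesis
    by (rule swap_balance_positive_rate[where y = y, OF Psi n a_range \<mu> \<open>0 < P\<close> _ y_nxt])
qed

theorem lemma6p2:
  fixes n :: nat and a :: "nat \<Rightarrow> real" and lam :: "nat \<Rightarrow> nat"
    and Psi :: "(nat \<Rightarrow> nat) \<Rightarrow> (nat \<Rightarrow> real) \<Rightarrow> real"
    and rho :: "nat \<Rightarrow> nat" and p :: "nat \<Rightarrow> real"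
    and \<mu> \<sigma> \<sigma>h :: "nat \<Rightarrow> nat"
  assumes n2: "2 \<le> n"
    and a_range: "\<And>k. 0 < a k \<and> a k < 1"
    and lam_mono: "\<And>i j. i \<le> j \<Longrightarrow> j < n \<Longrightarrow> lam i \<le> lam j"
    and Psi: "is_TASEP_family n a lam Psi"
    and rho_vals: "\<And>j. j < n \<Longrightarrow> rho j \<in> {1, 2}"
    and rho_mono: "\<And>i j. i \<le> j \<Longrightarrow> j < n \<Longrightarrow> rho i \<le> rho j"
    and rho_first: "rho 0 = 1" and rho_last: "rho (n - 1) = 2"
    and p_range: "\<And>j. j < n \<Longrightarrow> rho j = 1 \<Longrightarrow> 0 \<le> p j \<and> p j < 1"
    and mu: "\<mu> \<in> Srearr n lam" and sigma: "\<sigma> \<in> Omega n rho"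
    and sigmah: "\<sigma>h \<in> Omega n rho" and pos: "auxP n rho \<sigma>h \<sigma> > 0"
  shows "\<exists>g :: (nat \<Rightarrow> nat) \<Rightarrow> real \<Rightarrow> real.
           (\<forall>\<mu>h\<in>Srearr n lam. g \<mu>h \<in> O[at_top](\<lambda>z. 1 / z)) \<and>
           (\<forall>R>1. (\<Sum>\<mu>h\<in>Srearr n lam.
                     fullP n a rho p \<mu>h \<sigma>h \<mu> \<sigma> * Psi \<mu>h (act \<sigma>h (chi rho p R))
                     * (1 + g \<mu>h R))
                  = Psi \<mu> (act \<sigma> (chi rho p R)) * auxP n rho \<sigma>h \<sigma>)"
proof -
  have \<sigma>h: "\<sigma>h permutes {..<n}"
    using sigmah by (simp add: Omega_def)
  show ?thesis
  proof (cases "\<sigma> = \<sigma>h")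
    case True
    with n2 \<sigma>h mu show ?thesis
      by (intro exI[of _ "\<lambda>_ _. 0"]) (simp add: sum_fullP_stay auxP_stay)
  next
    case False
    with pos obtain i where i: "i < n" "dcond n rho \<sigma>h i" and \<sigma>: "\<sigma> = sbar n i \<circ> \<sigma>h"
      by (rule auxP_positive_step)
    have n: "0 < n"
      using n2 by simp
    define y where "y R = act \<sigma>h (chi rho p R)" for R
    have rho: "rho (inv \<sigma>h i) = 1" "rho (inv \<sigma>h (nxt n i)) = 2"
      using dcond_densities[OF n \<sigma>h i rho_vals] by simp_all
    then have y_i: "y R i = (if p (inv \<sigma>h i) > 0 then 1 / p (inv \<sigma>h i) else R)"
      and y_nxt: "y R (nxt n i) = R" for R
      by (simp_all add: y_def act_def chi_def)
    have "act \<sigma> (chi rho p R) = act (sbar n i) (y R)" for R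
      unfolding y_def \<sigma> by (rule act_comp[symmetric, OF permutes_bij[OF sbar_permutes[OF n i(1)]] permutes_bij[OF \<sigma>h]])
    moreover have "0 \<le> p (inv \<sigma>h i)"
      using p_range rho permutes_in_image[OF permutes_inv[OF \<sigma>h]] i(1) by simp
    ultimately obtain g where "\<forall>\<mu>h\<in>Srearr n lam. g \<mu>h \<in> O[at_top](\<lambda>z. 1 / z)"
      and "\<forall>R>1. (\<Sum>\<mu>h\<in>Srearr n lam. swap_move_prob n a (p (inv \<sigma>h i)) i \<mu>h \<mu> * Psi \<mu>h (y R) * (1 + g \<mu>h R))
                  = Psi \<mu> (act \<sigma> (chi rho p R))"
      using swap_balance[OF Psi n a_range mu i(1) _ y_i y_nxt] by auto
    with n2 \<sigma>h i show ?thesis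
      by (intro exI[of _ g]) (simp add: \<sigma> fullP_swap auxP_swap y_def sum_divide_distrib[symmetric])
  qed
qed

end
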